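(* Let $D$ be a $3$-dicritical digraph. Then $D$ does not contain $O_4$ as a (not necessarily induced) subdigraph.
   Context: A $2$-dicolouring is a map to $\{1,2\}$ whose colour classes induce acyclic subdigraphs (a digon $xy,yx$ is a directed cycle). $D$ is $3$-dicritical if $D$ has no $2$-dicolouring but every proper subdigraph has one. $O_4$ is the digraph on vertices $u,v,x,y$ with arcs $xy,yx$ (a digon), $ux,uy$, $xv,yv$, and $uv$. "Contains as a subdigraph" means up to isomorphism. *)

theory Defs
  imports Main
begin

text \<open>A (finite, loopless) digraph is a pair (V, A) with A a set of arcs between
  vertices of V. Digons (both (x,y) and (y,x)) are allowed; parallel arcs are not
  representable (simple digraphs).\<close>

definition digraph :: "'a set \<Rightarrow> ('a \<times> 'a) set \<Rightarrow> bool" where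
  "digraph V A \<longleftrightarrow> finite V \<and> A \<subseteq> V \<times> V \<and> (\<forall>x. (x, x) \<notin> A)"

text \<open>The subdigraph induced by S is acyclic (a digon is a directed cycle).\<close>
definition induces_acyclic :: "('a \<times> 'a) set \<Rightarrow> 'a set \<Rightarrow> bool" where
  "induces_acyclic A S \<longleftrightarrow> acyclic (A \<inter> (S \<times> S))"

definition two_dicolouring :: "'a set \<Rightarrow> ('a \<times> 'a) set \<Rightarrow> ('a \<Rightarrow> nat) \<Rightarrow> bool" where
  "two_dicolouring V A c \<longleftrightarrow> (\<forall>v\<in>V. c v \<in> {1, 2}) \<and>
     (\<forall>i\<in>{1::nat, 2}. induces_acyclic A {v \<in> V. c v = i})"

definition two_dicolourable :: "'a set \<Rightarrow> ('a \<times> 'a) set \<Rightarrow> bool" where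
  "two_dicolourable V A \<longleftrightarrow> (\<exists>c. two_dicolouring V A c)"

definition subdigraph :: "'a set \<Rightarrow> ('a \<times> 'a) set \<Rightarrow> 'a set \<Rightarrow> ('a \<times> 'a) set \<Rightarrow> bool" where
  "subdigraph V' A' V A \<longleftrightarrow> V' \<subseteq> V \<and> A' \<subseteq> A \<and> A' \<subseteq> V' \<times> V'"

definition three_dicritical :: "'a set \<Rightarrow> ('a \<times> 'a) set \<Rightarrow> bool" where
  "three_dicritical V A \<longleftrightarrow> \<not> two_dicolourable V A \<and>
     (\<forall>V' A'. subdigraph V' A' V A \<and> (V', A') \<noteq> (V, A) \<longrightarrow> two_dicolourable V' A')"

definition contains_subdigraph ::
  "'b set \<Rightarrow> ('b \<times> 'b) set \<Rightarrow> 'a set \<Rightarrow> ('a \<times> 'a) set \<Rightarrow> bool" where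
  "contains_subdigraph VH AH V A \<longleftrightarrow>
     (\<exists>f. inj_on f VH \<and> f ` VH \<subseteq> V \<and> (\<forall>(a, b)\<in>AH. (f a, f b) \<in> A))"

text \<open>O_4 with u = 0, v = 1, x = 2, y = 3.\<close>
definition O4_V :: "nat set" where
  "O4_V = {0, 1, 2, 3}"

definition O4_A :: "(nat \<times> nat) set" where
  "O4_A = {(2, 3), (3, 2), (0, 2), (0, 3), (2, 1), (3, 1), (0, 1)}"

end

theory Submission
  imports Defs
begin

text \<open>Let D be 3-dicritical and contain O_4, and 2-dicolour D minus the arc uv.
  The digon xy forces x and y into different colour classes. If u and v get
  the same colour, one of x, y shares it, so uv shortcuts a monochromatic
  path u-x-v or u-y-v. Putting uv back then closes no new monochromatic cycle,
  and D itself would be 2-dicolourable.\<close>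

lemma induces_acyclic_insert_shortcut:
  assumes "induces_acyclic A S"
    and "u \<in> S \<Longrightarrow> v \<in> S \<Longrightarrow> (u, v) \<in> (Restr A S)\<^sup>+"
  shows "induces_acyclic (insert (u, v) A) S"
proof (cases "u \<in> S \<and> v \<in> S")
  case True
  have "(v, u) \<notin> (Restr A S)\<^sup>*"
  proof
    assume "(v, u) \<in> (Restr A S)\<^sup>*"
    with assms True have "(u, u) \<in> (Restr A S)\<^sup>+" by simp
    with assms(1) show False unfolding induces_acyclic_def acyclic_def by blast
  qed
  moreover have "Restr (insert (u, v) A) S = insert (u, v) (Restr A S)" using True by blast
  ultimately show ?thesis using assms(1) unfolding induces_acyclic_def by simp
next
  case False
  then have "Restr (insert (u, v) A) S = Restr A S" by blast
  with assms(1) show ?thesis unfolding induces_acyclic_def by simp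
qed

lemma two_dicolouring_digon_colours_differ:
  assumes colouring: "two_dicolouring V A c"
    and "x \<in> V" "y \<in> V" "(x, y) \<in> A" "(y, x) \<in> A"
  shows "c x \<noteq> c y"
proof
  assume "c x = c y"
  let ?S = "{w \<in> V. c w = c x}"
  have digon: "(x, y) \<in> Restr A ?S" "(y, x) \<in> Restr A ?S"
    using assms(2-5) \<open>c x = c y\<close> by auto
  have "c x \<in> {1, 2}"
    using colouring \<open>x \<in> V\<close> unfolding two_dicolouring_def by blast
  then have "acyclic (Restr A ?S)"
    using colouring unfolding two_dicolouring_def induces_acyclic_def by blast
  with trancl_into_trancl[OF r_into_trancl, OF digon] show False
    unfolding acyclic_def by blast
qed

lemma two_dicolouring_insert_shortcut:
  assumes "two_dicolouring V A c"
    and "\<And>i. u \<in> V \<Longrightarrow> v \<in> V \<Longrightarrow> c u = i \<Longrightarrow> c v = i \<Longrightarrow>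
           (u, v) \<in> (Restr A {w \<in> V. c w = i})\<^sup>+"
  shows "two_dicolouring V (insert (u, v) A) c"
  using assms unfolding two_dicolouring_def
  by (auto intro!: induces_acyclic_insert_shortcut)

lemma two_dicolouring_insert_O4_arc:
  assumes colouring: "two_dicolouring V A c"
    and "x \<in> V" "y \<in> V"
    and "(x, y) \<in> A" "(y, x) \<in> A" "(u, x) \<in> A" "(u, y) \<in> A" "(x, v) \<in> A" "(y, v) \<in> A"
  shows "two_dicolouring V (insert (u, v) A) c"
proof (rule two_dicolouring_insert_shortcut[OF colouring])
  fix i assume "u \<in> V" "v \<in> V" and uv: "c u = i" "c v = i"
  let ?S = "{w \<in> V. c w = i}"
  have "c x \<noteq> c y"
    using two_dicolouring_digon_colours_differ[OF colouring] assms(2-5) by blast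
  moreover have "c x \<in> {1, 2}" "c y \<in> {1, 2}" "c u \<in> {1, 2}"
    using colouring \<open>x \<in> V\<close> \<open>y \<in> V\<close> \<open>u \<in> V\<close> unfolding two_dicolouring_def by blast+
  ultimately obtain w where "w \<in> {x, y}" "c w = i"
    using uv(1) by fastforce
  then have "(u, w) \<in> Restr A ?S" "(w, v) \<in> Restr A ?S"
    using assms(2-9) \<open>u \<in> V\<close> \<open>v \<in> V\<close> uv by auto
  then show "(u, v) \<in> (Restr A ?S)\<^sup>+"
    by (rule trancl_into_trancl[OF r_into_trancl])
qed

lemma three_dicritical_delete_arc_two_dicolourable:
  assumes "three_dicritical V A" "A \<subseteq> V \<times> V" "e \<in> A"
  shows "two_dicolourable V (A - {e})"
proof -
  have "subdigraph V (A - {e}) V A" "(V, A - {e}) \<noteq> (V, A)"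
    using assms(2,3) unfolding subdigraph_def by auto
  with assms(1) show ?thesis unfolding three_dicritical_def by blast
qed

lemma contains_O4E:
  assumes "contains_subdigraph O4_V O4_A V A"
  obtains u v x y where "x \<in> V" "y \<in> V" "x \<noteq> u" "x \<noteq> v" "y \<noteq> u" "y \<noteq> v"
    and "(x, y) \<in> A" "(y, x) \<in> A" "(u, x) \<in> A" "(u, y) \<in> A" "(x, v) \<in> A" "(y, v) \<in> A"
    and "(u, v) \<in> A"
proof -
  obtain f where "inj_on f O4_V" "f ` O4_V \<subseteq> V" "\<forall>(a, b)\<in>O4_A. (f a, f b) \<in> A"
    using assms unfolding contains_subdigraph_def by blast
  then show thesis
    using that[of "f 2" "f 3" "f 0" "f 1"] unfolding O4_V_def O4_A_def inj_on_def by auto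
qed

theorem lemma19:
  fixes V :: "'a set" and A :: "('a \<times> 'a) set"
  assumes "digraph V A"
    and "three_dicritical V A"
  shows "\<not> contains_subdigraph O4_V O4_A V A"
proof
  assume "contains_subdigraph O4_V O4_A V A"
  then obtain u v x y where xy: "x \<in> V" "y \<in> V" "x \<noteq> u" "x \<noteq> v" "y \<noteq> u" "y \<noteq> v"
    and arcs: "(x, y) \<in> A" "(y, x) \<in> A" "(u, x) \<in> A" "(u, y) \<in> A" "(x, v) \<in> A" "(y, v) \<in> A"
    and uv: "(u, v) \<in> A"
    by (rule contains_O4E)
  have "A \<subseteq> V \<times> V" using assms(1) unfolding digraph_def by blast
  then obtain c where c: "two_dicolouring V (A - {(u, v)}) c"
    using three_dicritical_delete_arc_two_dicolourable[OF assms(2) _ uv]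
    unfolding two_dicolourable_def by blast
  have "two_dicolouring V A c"
    using two_dicolouring_insert_O4_arc[OF c xy(1,2), of u v] xy arcs uv
    by (simp add: insert_absorb)
  then have "two_dicolourable V A"
    unfolding two_dicolourable_def by blast
  with assms(2) show False unfolding three_dicritical_def by blast
qed

end
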